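(* Let $\mathcal{M}$, $\pi_b$, $\pi_e$ be as in the context, and assume the reward decomposition (R), the transition factorisation (P), the policy factorisation (F) for both $\pi_b$ and $\pi_e$, and factor-wise absolute continuity (AC). Let $\mathcal{D}=\{\tau^{(n)}\}_{n=1}^N$ consist of $N$ independent trajectories generated by $\pi_b$. Then the decomposed IS estimator $$\hat Q^{DecIS}_{\pi_e}=\sum_{d=1}^{D}\frac1N\sum_{n=1}^N\sum_{t=0}^{T}\gamma^t\,\rho^{(n),d}_{0:T}\,r^d(z^{(n),d}_t,a^{(n),d}_t)$$ and the decomposed per-decision IS estimator $$\hat Q^{DecPDIS}_{\pi_e}=\sum_{d=1}^{D}\frac1N\sum_{n=1}^N\sum_{t=0}^{T}\gamma^t\,\rho^{(n),d}_{0:t}\,r^d(z^{(n),d}_t,a^{(n),d}_t)$$ are both unbiased estimators of $V_{\pi_e}=\mathbb{E}_{\pi_e}\big[\sum_{t=0}^T\gamma^t r(s_t,a_t)\big]$, i.e. $\mathbb{E}_{\pi_b}[\hat Q^{DecIS}_{\pi_e}]=\mathbb{E}_{\pi_b}[\hat Q^{DecPDIS}_{\pi_e}]=V_{\pi_e}$.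
   Context: A finite-horizon MDP has finite state space $\mathcal{S}$, action space $\mathcal{A}=\mathcal{A}^1\times\cdots\times\mathcal{A}^D$ (finite), so each action is $a=(a^1,\dots,a^D)$ with $a^d\in\mathcal{A}^d$; transition kernel $p(\cdot\mid s,a)$, a deterministic reward function $r:\mathcal{S}\times\mathcal{A}\to\mathbb{R}$, initial state distribution $d_1$, discount $\gamma\in[0,1]$ and horizon $T$. A (stationary) policy $\pi$ gives a distribution $\pi(\cdot\mid s)$ on $\mathcal{A}$. A trajectory under $\pi$ is $s_0\sim d_1$, $a_t\sim\pi(\cdot\mid s_t)$, $s_{t+1}\sim p(\cdot\mid s_t,a_t)$ for $t=0,\dots,T$; $\mathbb{E}_\pi$ denotes expectation over such trajectories. There is a state abstraction map $\phi(s)=(z^1,\dots,z^D)$ with $z^d\in\mathcal{Z}^d$ (finite), and we write $z^d_t$ for the $d$-th component of $\phi(s_t)$. Standing factorisation assumptions: (R) $r(s,a)=\sum_{d=1}^D r^d(z^d,a^d)$ for functions $r^d:\mathcal{Z}^d\times\mathcal{A}^d\to\mathbb{R}$, where $\phi(s)=(z^1,\dots,z^D)$; (P) for all $s,s',a$: $\sum_{\tilde s\in\phi^{-1}(\phi(s'))}p(\tilde s\mid s,a)=\prod_{d=1}^D p^d(z'^d\mid z^d,a^d)$ for sub-transition kernels $p^d$ on $\mathcal{Z}^d$, where $\phi(s')=(z'^1,\dots,z'^D)$; (F) a policy $\pi$ is factored if $\pi(a\mid s)=\prod_{d=1}^D\pi^d(a^d\mid z^d)$ for sub-policies $\pi^d(\cdot\mid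 z^d)$ on $\mathcal{A}^d$. (AC) For all $d$, $z^d$, $a^d$: if $\pi_b^d(a^d\mid z^d)=0$ then $\pi_e^d(a^d\mid z^d)=0$. For trajectory $n$ with sub-actions $a^{(n),d}_t$ and abstract states $z^{(n),d}_t$, the factor-$d$ importance ratio is $\rho^{(n),d}_{0:t}=\prod_{t'=0}^{t}\frac{\pi_e^d(a^{(n),d}_{t'}\mid z^{(n),d}_{t'})}{\pi_b^d(a^{(n),d}_{t'}\mid z^{(n),d}_{t'})}$. *)

theory Defs
  imports "HOL-Probability.Probability"
begin

(* A trajectory is the list [(s_0,a_0),...,(s_T,a_T)] (length T+1).
   rollout p pol n s: starting in state s, sample a ~ pol s, then s' ~ p s a, ... *)
fun rollout :: "('s \<Rightarrow> 'a \<Rightarrow> 's pmf) \<Rightarrow> ('s \<Rightarrow> 'a pmf) \<Rightarrow> nat \<Rightarrow> 's \<Rightarrow> ('s \<times> 'a) list pmf" where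
  "rollout p pol 0 s = map_pmf (\<lambda>a. [(s, a)]) (pol s)"
| "rollout p pol (Suc n) s =
     bind_pmf (pol s) (\<lambda>a. bind_pmf (p s a) (\<lambda>s'.
       map_pmf (\<lambda>rest. (s, a) # rest) (rollout p pol n s')))"

definition traj :: "'s pmf \<Rightarrow> ('s \<Rightarrow> 'a \<Rightarrow> 's pmf) \<Rightarrow> ('s \<Rightarrow> 'a pmf) \<Rightarrow> nat \<Rightarrow> ('s \<times> 'a) list pmf" where
  "traj d1 p pol T = bind_pmf d1 (rollout p pol T)"

definition value_fn :: "'s pmf \<Rightarrow> ('s \<Rightarrow> 'a \<Rightarrow> 's pmf) \<Rightarrow> ('s \<Rightarrow> 'a \<Rightarrow> real) \<Rightarrow> real \<Rightarrow> nat
    \<Rightarrow> ('s \<Rightarrow> 'a pmf) \<Rightarrow> real" where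
  "value_fn d1 p r \<gamma> T pol = measure_pmf.expectation (traj d1 p pol T)
     (\<lambda>\<tau>. \<Sum>t\<le>T. \<gamma> ^ t * r (fst (\<tau> ! t)) (snd (\<tau> ! t)))"

(* factor-d importance ratio rho^d_{0:t} of a trajectory tau;
   actions are functions 'd => 'b, abstract states phi s :: 'd => 'z *)
definition ratio :: "('d \<Rightarrow> 'z \<Rightarrow> 'b pmf) \<Rightarrow> ('d \<Rightarrow> 'z \<Rightarrow> 'b pmf) \<Rightarrow> ('s \<Rightarrow> 'd \<Rightarrow> 'z)
    \<Rightarrow> ('s \<times> ('d \<Rightarrow> 'b)) list \<Rightarrow> 'd \<Rightarrow> nat \<Rightarrow> real" where
  "ratio pib pie \<phi> \<tau> d t = (\<Prod>t'\<le>t.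
      pmf (pie d (\<phi> (fst (\<tau> ! t')) d)) (snd (\<tau> ! t') d) /
      pmf (pib d (\<phi> (fst (\<tau> ! t')) d)) (snd (\<tau> ! t') d))"

definition DecIS :: "('d::finite \<Rightarrow> 'z \<Rightarrow> 'b pmf) \<Rightarrow> ('d \<Rightarrow> 'z \<Rightarrow> 'b pmf) \<Rightarrow> ('s \<Rightarrow> 'd \<Rightarrow> 'z)
    \<Rightarrow> ('d \<Rightarrow> 'z \<Rightarrow> 'b \<Rightarrow> real) \<Rightarrow> real \<Rightarrow> nat \<Rightarrow> nat
    \<Rightarrow> (nat \<Rightarrow> ('s \<times> ('d \<Rightarrow> 'b)) list) \<Rightarrow> real" where
  "DecIS pib pie \<phi> rd \<gamma> T N Ds = (\<Sum>d\<in>UNIV. 1 / real N * (\<Sum>n<N. \<Sum>t\<le>T.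
      \<gamma> ^ t * ratio pib pie \<phi> (Ds n) d T *
      rd d (\<phi> (fst (Ds n ! t)) d) (snd (Ds n ! t) d)))"

definition DecPDIS :: "('d::finite \<Rightarrow> 'z \<Rightarrow> 'b pmf) \<Rightarrow> ('d \<Rightarrow> 'z \<Rightarrow> 'b pmf) \<Rightarrow> ('s \<Rightarrow> 'd \<Rightarrow> 'z)
    \<Rightarrow> ('d \<Rightarrow> 'z \<Rightarrow> 'b \<Rightarrow> real) \<Rightarrow> real \<Rightarrow> nat \<Rightarrow> nat
    \<Rightarrow> (nat \<Rightarrow> ('s \<times> ('d \<Rightarrow> 'b)) list) \<Rightarrow> real" where
  "DecPDIS pib pie \<phi> rd \<gamma> T N Ds = (\<Sum>d\<in>UNIV. 1 / real N * (\<Sum>n<N. \<Sum>t\<le>T.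
      \<gamma> ^ t * ratio pib pie \<phi> (Ds n) d t *
      rd d (\<phi> (fst (Ds n ! t)) d) (snd (Ds n ! t) d)))"

end

theory Submission
  imports Defs
begin

(* Fix a factor d. By the factorisations of the transition kernel and of both policies, the
   projected trajectory (z^d_t, a^d_t)_t of a rollout is itself a rollout of the small chain with
   kernel p^d and sub-policy pi^d, for the behaviour and the target policy alike. On that chain
   rho^d_{0:k} is the likelihood ratio of the first k+1 steps, so by absolute continuity it turns
   the behaviour expectation of any function of those steps into the target expectation. Since
   r^d(z^d_t, a^d_t) only depends on the first t+1 steps, every truncation point k with
   t <= k <= T works; k = T gives DecIS and k = t gives DecPDIS. Summing over d and t with the
   reward decomposition, and over the N i.i.d. trajectories by linearity, yields V_{pi_e}. *)

lemma expectation_bind_pmf_finite: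
  fixes h :: "'b \<Rightarrow> real"
  assumes "finite (set_pmf M)" and "\<And>x. x \<in> set_pmf M \<Longrightarrow> finite (set_pmf (f x))"
  shows "measure_pmf.expectation (bind_pmf M f) h
       = measure_pmf.expectation M (\<lambda>x. measure_pmf.expectation (f x) h)"
  using assms
  by (simp add: pmf_expectation_bind[of "set_pmf M"] integral_measure_pmf[of "set_pmf M"])

lemma expectation_likelihood_ratio:
  fixes f :: "'a \<Rightarrow> real"
  assumes "finite (set_pmf mb)" and AC: "\<And>b. pmf mb b = 0 \<Longrightarrow> pmf me b = 0"
  shows "measure_pmf.expectation mb (\<lambda>b. pmf me b / pmf mb b * f b)
       = measure_pmf.expectation me f"
proof -
  have "set_pmf me \<subseteq> set_pmf mb"
    using AC by (auto simp: set_pmf_eq)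
  then have "measure_pmf.expectation me f = (\<Sum>b\<in>set_pmf mb. f b * pmf me b)"
    using assms(1) by (intro integral_measure_pmf_real) auto
  also have "\<dots> = (\<Sum>b\<in>set_pmf mb. pmf me b / pmf mb b * f b * pmf mb b)"
    by (intro sum.cong) (auto simp: set_pmf_eq)
  also have "\<dots> = measure_pmf.expectation mb (\<lambda>b. pmf me b / pmf mb b * f b)"
    using assms(1) by (intro integral_measure_pmf_real[symmetric]) auto
  finally show ?thesis ..
qed

lemma finite_set_pmf_rollout:
  fixes pol :: "'s::finite \<Rightarrow> 'a::finite pmf"
  shows "finite (set_pmf (rollout p pol n s))"
  by (induction n arbitrary: s) (auto simp: set_bind_pmf)

lemma length_rollout: "\<tau> \<in> set_pmf (rollout p pol n s) \<Longrightarrow> length \<tau> = Suc n"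
  by (induction n arbitrary: s \<tau>) (auto simp: set_bind_pmf)

lemma expectation_rollout_Suc:
  fixes pol :: "'s::finite \<Rightarrow> 'a::finite pmf" and f :: "('s \<times> 'a) list \<Rightarrow> real"
  shows "measure_pmf.expectation (rollout p pol (Suc n) s) f
       = measure_pmf.expectation (pol s) (\<lambda>a. measure_pmf.expectation (p s a) (\<lambda>s'.
           measure_pmf.expectation (rollout p pol n s') (\<lambda>rest. f ((s, a) # rest))))"
  by (simp add: expectation_bind_pmf_finite set_bind_pmf finite_set_pmf_rollout)

definition importance_weight :: "('z \<Rightarrow> 'b pmf) \<Rightarrow> ('z \<Rightarrow> 'b pmf) \<Rightarrow> ('z \<times> 'b) list \<Rightarrow> nat \<Rightarrow> real"
  where "importance_weight mb me \<sigma> k =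
    (\<Prod>t\<le>k. pmf (me (fst (\<sigma> ! t))) (snd (\<sigma> ! t)) / pmf (mb (fst (\<sigma> ! t))) (snd (\<sigma> ! t)))"

lemma importance_weight_Cons_0:
  "importance_weight mb me ((z, b) # \<sigma>) 0 = pmf (me z) b / pmf (mb z) b"
  by (simp add: importance_weight_def)

lemma importance_weight_Cons_Suc:
  "importance_weight mb me ((z, b) # \<sigma>) (Suc k)
     = pmf (me z) b / pmf (mb z) b * importance_weight mb me \<sigma> k"
  unfolding importance_weight_def by (subst prod.atMost_Suc_shift) simp

lemma expectation_importance_weight_rollout:
  fixes q :: "'z::finite \<Rightarrow> 'b::finite \<Rightarrow> 'z pmf" and mb me :: "'z \<Rightarrow> 'b pmf"
    and g :: "('z \<times> 'b) list \<Rightarrow> real"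
  assumes AC: "\<And>z b. pmf (mb z) b = 0 \<Longrightarrow> pmf (me z) b = 0" and "k \<le> n"
  shows "measure_pmf.expectation (rollout q mb n z)
           (\<lambda>\<sigma>. importance_weight mb me \<sigma> k * g (take (Suc k) \<sigma>))
       = measure_pmf.expectation (rollout q me n z) (\<lambda>\<sigma>. g (take (Suc k) \<sigma>))"
  using \<open>k \<le> n\<close>
proof (induction n arbitrary: z k g)
  case 0
  then show ?case
    using expectation_likelihood_ratio[of "mb z" "me z" "\<lambda>b. g [(z, b)]"] AC
    by (simp add: importance_weight_Cons_0)
next
  case (Suc n)
  let ?E = "\<lambda>pol z' b. measure_pmf.expectation (rollout q pol n z')
              (\<lambda>rest. g (take (Suc k) ((z, b) # rest)))"
  have step: "measure_pmf.expectation (rollout q mb n z')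
        (\<lambda>rest. importance_weight mb me ((z, b) # rest) k * g (take (Suc k) ((z, b) # rest)))
      = pmf (me z) b / pmf (mb z) b * ?E me z' b" for z' b
  proof (cases k)
    case 0
    then show ?thesis by (simp add: importance_weight_Cons_0)
  next
    case (Suc k')
    then show ?thesis
      using Suc.IH[of k' z' "\<lambda>l. g ((z, b) # l)"] Suc.prems
      by (simp add: importance_weight_Cons_Suc mult.assoc)
  qed
  have "measure_pmf.expectation (rollout q mb (Suc n) z)
          (\<lambda>\<sigma>. importance_weight mb me \<sigma> k * g (take (Suc k) \<sigma>))
      = measure_pmf.expectation (mb z) (\<lambda>b. pmf (me z) b / pmf (mb z) b *
          measure_pmf.expectation (q z b) (\<lambda>z'. ?E me z' b))"
    by (subst expectation_rollout_Suc) (simp only: step, simp)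
  also have "\<dots> = measure_pmf.expectation (me z) (\<lambda>b.
          measure_pmf.expectation (q z b) (\<lambda>z'. ?E me z' b))"
    using AC by (intro expectation_likelihood_ratio) auto
  also have "\<dots> = measure_pmf.expectation (rollout q me (Suc n) z) (\<lambda>\<sigma>. g (take (Suc k) \<sigma>))"
    by (subst expectation_rollout_Suc) (simp del: rollout.simps)
  finally show ?case .
qed

lemma map_pmf_component_factored:
  fixes Q :: "'d::finite \<Rightarrow> 'b pmf"
  assumes "\<And>a. pmf M a = (\<Prod>d\<in>UNIV. pmf (Q d) (a d))"
  shows "map_pmf (\<lambda>a. a d) M = Q d"
proof -
  have "M = Pi_pmf UNIV undefined Q"
    by (rule pmf_eqI) (simp add: pmf_Pi assms)
  then show ?thesis by (simp add: Pi_pmf_component)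
qed

lemma map_pmf_abstraction_component_factored:
  fixes \<phi> :: "'s::finite \<Rightarrow> 'd::finite \<Rightarrow> 'z" and Q :: "'d \<Rightarrow> 'z pmf"
  assumes P: "\<And>s'. (\<Sum>s''\<in>{s''. \<phi> s'' = \<phi> s'}. pmf M s'') = (\<Prod>d\<in>UNIV. pmf (Q d) (\<phi> s' d))"
  shows "map_pmf (\<lambda>s'. \<phi> s' d) M = Q d"
proof -
  let ?PQ = "Pi_pmf UNIV undefined Q"
  \<comment> \<open>The hypothesis only pins down the image law on the range of \<open>\<phi>\<close>; since both
      sides are probability distributions, domination forces equality.\<close>
  have le: "pmf (map_pmf \<phi> M) c \<le> pmf ?PQ c" for c
  proof (cases "c \<in> range \<phi>")
    case True
    then obtain s' where c: "c = \<phi> s'" by auto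
    have "pmf (map_pmf \<phi> M) c = (\<Sum>s''\<in>{s''. \<phi> s'' = \<phi> s'}. pmf M s'')"
      unfolding pmf_map c by (subst measure_measure_pmf_finite) (auto simp: vimage_def)
    then show ?thesis using P[of s'] c by (simp add: pmf_Pi)
  next
    case False
    then have "pmf (map_pmf \<phi> M) c = 0"
      by (auto simp: pmf_eq_0_set_pmf)
    then show ?thesis by simp
  qed
  have "map_pmf \<phi> M = ?PQ"
    using pmf_neq_exists_less[of ?PQ "map_pmf \<phi> M"] le by (metis not_le)
  then have "map_pmf (\<lambda>c. c d) (map_pmf \<phi> M) = Q d"
    by (simp add: Pi_pmf_component)
  then show ?thesis by (simp add: map_pmf_comp)
qed

lemma expectation_sum_Pi_pmf_iid:
  fixes f :: "'a \<Rightarrow> real"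
  assumes "finite (set_pmf M)"
  shows "measure_pmf.expectation (Pi_pmf {..<N} dflt (\<lambda>_. M)) (\<lambda>Ds. \<Sum>n<N. f (Ds n))
       = real N * measure_pmf.expectation M f"
proof -
  have marginal: "map_pmf (\<lambda>Ds. Ds n) (Pi_pmf {..<N} dflt (\<lambda>_. M)) = M" if "n < N" for n
    using that by (simp add: Pi_pmf_component)
  have integrable: "integrable (Pi_pmf {..<N} dflt (\<lambda>_. M)) (\<lambda>Ds. f (Ds n))" if "n < N" for n
  proof -
    have "integrable (map_pmf (\<lambda>Ds. Ds n) (Pi_pmf {..<N} dflt (\<lambda>_. M))) f"
      using assms by (simp add: marginal[OF that] integrable_measure_pmf_finite)
    then show ?thesis by simp
  qed
  have "measure_pmf.expectation (Pi_pmf {..<N} dflt (\<lambda>_. M)) (\<lambda>Ds. \<Sum>n<N. f (Ds n))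
      = (\<Sum>n<N. measure_pmf.expectation (map_pmf (\<lambda>Ds. Ds n) (Pi_pmf {..<N} dflt (\<lambda>_. M))) f)"
    using integrable by (subst Bochner_Integration.integral_sum) auto
  also have "\<dots> = (\<Sum>n<N. measure_pmf.expectation M f)"
    by (intro sum.cong) (auto simp: marginal)
  finally show ?thesis by simp
qed

definition factor_traj :: "('s \<Rightarrow> 'd \<Rightarrow> 'z) \<Rightarrow> 'd \<Rightarrow> ('s \<times> ('d \<Rightarrow> 'b)) list \<Rightarrow> ('z \<times> 'b) list"
  where "factor_traj \<phi> d = map (\<lambda>(s, a). (\<phi> s d, a d))"

lemma length_traj: "\<tau> \<in> set_pmf (traj d1 p pol T) \<Longrightarrow> length \<tau> = Suc T"
  by (auto simp: traj_def set_bind_pmf dest: length_rollout)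

lemma ratio_eq_importance_weight:
  "k < length \<tau> \<Longrightarrow>
   ratio pibd pied \<phi> \<tau> d k = importance_weight (pibd d) (pied d) (factor_traj \<phi> d \<tau>) k"
  unfolding ratio_def importance_weight_def factor_traj_def
  by (intro prod.cong) (auto simp: case_prod_beta)

locale factored_transition =
  fixes p :: "'s::finite \<Rightarrow> ('d::finite \<Rightarrow> 'b::finite) \<Rightarrow> 's pmf"
    and \<phi> :: "'s \<Rightarrow> 'd \<Rightarrow> 'z::finite"
    and pd :: "'d \<Rightarrow> 'z \<Rightarrow> 'b \<Rightarrow> 'z pmf"
  assumes transition_factored: "\<And>s s' a. (\<Sum>s''\<in>{s''. \<phi> s'' = \<phi> s'}. pmf (p s a) s'')
                = (\<Prod>d\<in>UNIV. pmf (pd d (\<phi> s d) (a d)) (\<phi> s' d))"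
begin

lemma map_pmf_factor_traj_rollout:
  fixes pol :: "'s \<Rightarrow> ('d \<Rightarrow> 'b) pmf" and pold :: "'d \<Rightarrow> 'z \<Rightarrow> 'b pmf"
  assumes F: "\<And>s a. pmf (pol s) a = (\<Prod>d\<in>UNIV. pmf (pold d (\<phi> s d)) (a d))"
  shows "map_pmf (factor_traj \<phi> d) (rollout p pol n s) = rollout (pd d) (pold d) n (\<phi> s d)"
proof (induction n arbitrary: s)
  case 0
  have "map_pmf (factor_traj \<phi> d) (rollout p pol 0 s)
      = map_pmf (\<lambda>b. [(\<phi> s d, b)]) (map_pmf (\<lambda>a. a d) (pol s))"
    by (simp add: map_pmf_comp factor_traj_def)
  then show ?case
    by (simp add: map_pmf_component_factored[OF F])
next
  case (Suc n)
  have policy: "map_pmf (\<lambda>a. a d) (pol s) = pold d (\<phi> s d)"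
    by (rule map_pmf_component_factored[OF F])
  have transition: "map_pmf (\<lambda>s'. \<phi> s' d) (p s a) = pd d (\<phi> s d) (a d)" for a
    by (rule map_pmf_abstraction_component_factored[OF transition_factored])
  have "map_pmf (factor_traj \<phi> d) (rollout p pol (Suc n) s)
     = bind_pmf (pol s) (\<lambda>a. bind_pmf (map_pmf (\<lambda>s'. \<phi> s' d) (p s a)) (\<lambda>z'.
         map_pmf (\<lambda>rest. (\<phi> s d, a d) # rest) (rollout (pd d) (pold d) n z')))"
    by (simp add: map_bind_pmf map_pmf_comp bind_map_pmf factor_traj_def flip: Suc.IH)
  also have "\<dots> = bind_pmf (map_pmf (\<lambda>a. a d) (pol s)) (\<lambda>b. bind_pmf (pd d (\<phi> s d) b) (\<lambda>z'.
         map_pmf (\<lambda>rest. (\<phi> s d, b) # rest) (rollout (pd d) (pold d) n z')))"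
    by (simp add: transition bind_map_pmf)
  finally show ?case
    by (simp add: policy)
qed

end

locale factored_off_policy = factored_transition p \<phi> pd
  for p :: "'s::finite \<Rightarrow> ('d::finite \<Rightarrow> 'b::finite) \<Rightarrow> 's pmf"
    and \<phi> :: "'s \<Rightarrow> 'd \<Rightarrow> 'z::finite"
    and pd :: "'d \<Rightarrow> 'z \<Rightarrow> 'b \<Rightarrow> 'z pmf" +
  fixes pib pie :: "'s \<Rightarrow> ('d \<Rightarrow> 'b) pmf"
    and pibd pied :: "'d \<Rightarrow> 'z \<Rightarrow> 'b pmf"
  assumes behaviour_factored: "\<And>s a. pmf (pib s) a = (\<Prod>d\<in>UNIV. pmf (pibd d (\<phi> s d)) (a d))"
    and target_factored: "\<And>s a. pmf (pie s) a = (\<Prod>d\<in>UNIV. pmf (pied d (\<phi> s d)) (a d))"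
    and absolutely_continuous: "\<And>d z b. pmf (pibd d z) b = 0 \<Longrightarrow> pmf (pied d z) b = 0"
begin

lemma expectation_ratio_traj:
  fixes g :: "('z \<times> 'b) list \<Rightarrow> real"
  assumes "k \<le> T"
  shows "measure_pmf.expectation (traj d1 p pib T)
           (\<lambda>\<tau>. ratio pibd pied \<phi> \<tau> d k * g (take (Suc k) (factor_traj \<phi> d \<tau>)))
       = measure_pmf.expectation (traj d1 p pie T) (\<lambda>\<tau>. g (take (Suc k) (factor_traj \<phi> d \<tau>)))"
proof -
  have "measure_pmf.expectation (rollout p pib T s)
          (\<lambda>\<tau>. ratio pibd pied \<phi> \<tau> d k * g (take (Suc k) (factor_traj \<phi> d \<tau>)))
      = measure_pmf.expectation (rollout p pie T s) (\<lambda>\<tau>. g (take (Suc k) (factor_traj \<phi> d \<tau>)))"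
    for s
  proof -
    have "measure_pmf.expectation (rollout p pib T s)
            (\<lambda>\<tau>. ratio pibd pied \<phi> \<tau> d k * g (take (Suc k) (factor_traj \<phi> d \<tau>)))
        = measure_pmf.expectation (map_pmf (factor_traj \<phi> d) (rollout p pib T s))
            (\<lambda>\<sigma>. importance_weight (pibd d) (pied d) \<sigma> k * g (take (Suc k) \<sigma>))"
      using \<open>k \<le> T\<close>
      by (auto intro!: integral_cong_AE
          simp: AE_measure_pmf_iff ratio_eq_importance_weight dest!: length_rollout)
    also have "\<dots> = measure_pmf.expectation (rollout (pd d) (pied d) T (\<phi> s d))
                     (\<lambda>\<sigma>. g (take (Suc k) \<sigma>))"
      using absolutely_continuous \<open>k \<le> T\<close>
      by (simp add: map_pmf_factor_traj_rollout[where pol=pib and pold=pibd, OF behaviour_factored]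
          expectation_importance_weight_rollout)
    also have "\<dots> = measure_pmf.expectation (rollout p pie T s)
                     (\<lambda>\<tau>. g (take (Suc k) (factor_traj \<phi> d \<tau>)))"
      by (simp flip: map_pmf_factor_traj_rollout[where pol=pie and pold=pied, OF target_factored])
    finally show ?thesis .
  qed
  then show ?thesis
    by (simp add: traj_def expectation_bind_pmf_finite finite_set_pmf_rollout)
qed

lemma expectation_ratio_reward:
  fixes rd :: "'d \<Rightarrow> 'z \<Rightarrow> 'b \<Rightarrow> real"
  assumes "t \<le> k" "k \<le> T"
  shows "measure_pmf.expectation (traj d1 p pib T)
           (\<lambda>\<tau>. ratio pibd pied \<phi> \<tau> d k * rd d (\<phi> (fst (\<tau> ! t)) d) (snd (\<tau> ! t) d))
       = measure_pmf.expectation (traj d1 p pie T)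
           (\<lambda>\<tau>. rd d (\<phi> (fst (\<tau> ! t)) d) (snd (\<tau> ! t) d))"
proof -
  define g where "g \<sigma> = rd d (fst (\<sigma> ! t)) (snd (\<sigma> ! t))" for \<sigma> :: "('z \<times> 'b) list"
  have reward: "g (take (Suc k) (factor_traj \<phi> d \<tau>)) = rd d (\<phi> (fst (\<tau> ! t)) d) (snd (\<tau> ! t) d)"
    if "\<tau> \<in> set_pmf (traj d1 p pol T)" for \<tau> and pol :: "'s \<Rightarrow> ('d \<Rightarrow> 'b) pmf"
    using length_traj[OF that] assms by (simp add: g_def factor_traj_def case_prod_beta)
  have "measure_pmf.expectation (traj d1 p pib T)
          (\<lambda>\<tau>. ratio pibd pied \<phi> \<tau> d k * rd d (\<phi> (fst (\<tau> ! t)) d) (snd (\<tau> ! t) d))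
      = measure_pmf.expectation (traj d1 p pib T)
          (\<lambda>\<tau>. ratio pibd pied \<phi> \<tau> d k * g (take (Suc k) (factor_traj \<phi> d \<tau>)))"
    by (intro integral_cong_AE) (auto simp: AE_measure_pmf_iff reward)
  also have "\<dots> = measure_pmf.expectation (traj d1 p pie T) (\<lambda>\<tau>. g (take (Suc k) (factor_traj \<phi> d \<tau>)))"
    using \<open>k \<le> T\<close> by (rule expectation_ratio_traj)
  also have "\<dots> = measure_pmf.expectation (traj d1 p pie T)
                   (\<lambda>\<tau>. rd d (\<phi> (fst (\<tau> ! t)) d) (snd (\<tau> ! t) d))"
    by (intro integral_cong_AE) (auto simp: AE_measure_pmf_iff reward)
  finally show ?thesis .
qed

lemma expectation_decomposed_estimator:
  fixes r :: "'s \<Rightarrow> ('d \<Rightarrow> 'b) \<Rightarrow> real" and rd :: "'d \<Rightarrow> 'z \<Rightarrow> 'b \<Rightarrow> real"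
    and trunc :: "nat \<Rightarrow> nat"
  assumes "N \<ge> 1"
    and R: "\<And>s a. r s a = (\<Sum>d\<in>UNIV. rd d (\<phi> s d) (a d))"
    and trunc: "\<And>t. t \<le> T \<Longrightarrow> t \<le> trunc t \<and> trunc t \<le> T"
  shows "measure_pmf.expectation (Pi_pmf {..<N} dflt (\<lambda>_. traj d1 p pib T))
      (\<lambda>Ds. \<Sum>d\<in>UNIV. 1 / real N * (\<Sum>n<N. \<Sum>t\<le>T.
        \<gamma> ^ t * ratio pibd pied \<phi> (Ds n) d (trunc t) * rd d (\<phi> (fst (Ds n ! t)) d) (snd (Ds n ! t) d)))
    = value_fn d1 p r \<gamma> T pie"
proof -
  have fin: "finite (set_pmf (traj d1 p pol T))" for pol :: "'s \<Rightarrow> ('d \<Rightarrow> 'b) pmf"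
    by (auto simp: traj_def set_bind_pmf finite_set_pmf_rollout)
  let ?reward = "\<lambda>\<tau> d t. rd d (\<phi> (fst (\<tau> ! t)) d) (snd (\<tau> ! t) d)"
  define f where "f \<tau> = (\<Sum>d\<in>UNIV. \<Sum>t\<le>T. \<gamma> ^ t * (ratio pibd pied \<phi> \<tau> d (trunc t) * ?reward \<tau> d t))"
    for \<tau>
  have "(\<lambda>Ds. \<Sum>d\<in>UNIV. 1 / real N * (\<Sum>n<N. \<Sum>t\<le>T.
          \<gamma> ^ t * ratio pibd pied \<phi> (Ds n) d (trunc t) * ?reward (Ds n) d t))
      = (\<lambda>Ds. 1 / real N * (\<Sum>n<N. f (Ds n)))"
    unfolding f_def by (auto simp: sum_distrib_left mult.assoc intro!: ext sum.swap[THEN trans])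
  then have "measure_pmf.expectation (Pi_pmf {..<N} dflt (\<lambda>_. traj d1 p pib T))
      (\<lambda>Ds. \<Sum>d\<in>UNIV. 1 / real N * (\<Sum>n<N. \<Sum>t\<le>T.
          \<gamma> ^ t * ratio pibd pied \<phi> (Ds n) d (trunc t) * ?reward (Ds n) d t))
      = measure_pmf.expectation (traj d1 p pib T) f"
    using \<open>N \<ge> 1\<close> by (simp add: expectation_sum_Pi_pmf_iid[OF fin])
  also have "\<dots> = (\<Sum>d\<in>UNIV. \<Sum>t\<le>T. \<gamma> ^ t *
      measure_pmf.expectation (traj d1 p pib T) (\<lambda>\<tau>. ratio pibd pied \<phi> \<tau> d (trunc t) * ?reward \<tau> d t))"
    unfolding f_def by (simp add: Bochner_Integration.integral_sum integrable_measure_pmf_finite[OF fin])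
  also have "\<dots> = (\<Sum>d\<in>UNIV. \<Sum>t\<le>T. \<gamma> ^ t *
      measure_pmf.expectation (traj d1 p pie T) (\<lambda>\<tau>. ?reward \<tau> d t))"
    using trunc by (simp add: expectation_ratio_reward)
  also have "\<dots> = measure_pmf.expectation (traj d1 p pie T)
      (\<lambda>\<tau>. \<Sum>d\<in>UNIV. \<Sum>t\<le>T. \<gamma> ^ t * ?reward \<tau> d t)"
    by (simp add: Bochner_Integration.integral_sum integrable_measure_pmf_finite[OF fin])
  also have "\<dots> = value_fn d1 p r \<gamma> T pie"
    unfolding value_fn_def R
    by (auto simp: sum_distrib_left intro!: arg_cong[where f="measure_pmf.expectation _"] ext sum.swap)
  finally show ?thesis .
qed

end

theorem theorem2:
  fixes d1 :: "'s::finite pmf"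
    and p :: "'s \<Rightarrow> ('d::finite \<Rightarrow> 'b::finite) \<Rightarrow> 's pmf"
    and r :: "'s \<Rightarrow> ('d \<Rightarrow> 'b) \<Rightarrow> real"
    and \<phi> :: "'s \<Rightarrow> 'd \<Rightarrow> 'z::finite"
    and rd :: "'d \<Rightarrow> 'z \<Rightarrow> 'b \<Rightarrow> real"
    and pd :: "'d \<Rightarrow> 'z \<Rightarrow> 'b \<Rightarrow> 'z pmf"
    and pib pie :: "'s \<Rightarrow> ('d \<Rightarrow> 'b) pmf"
    and pibd pied :: "'d \<Rightarrow> 'z \<Rightarrow> 'b pmf"
    and \<gamma> :: real and T N :: nat
  assumes gamma: "0 \<le> \<gamma>" "\<gamma> \<le> 1"
    and N: "N \<ge> 1"
    and R: "\<And>s a. r s a = (\<Sum>d\<in>UNIV. rd d (\<phi> s d) (a d))"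
    and P: "\<And>s s' a. (\<Sum>s''\<in>{s''. \<phi> s'' = \<phi> s'}. pmf (p s a) s'')
                = (\<Prod>d\<in>UNIV. pmf (pd d (\<phi> s d) (a d)) (\<phi> s' d))"
    and Fb: "\<And>s a. pmf (pib s) a = (\<Prod>d\<in>UNIV. pmf (pibd d (\<phi> s d)) (a d))"
    and Fe: "\<And>s a. pmf (pie s) a = (\<Prod>d\<in>UNIV. pmf (pied d (\<phi> s d)) (a d))"
    and AC: "\<And>d z b. pmf (pibd d z) b = 0 \<Longrightarrow> pmf (pied d z) b = 0"
  shows "measure_pmf.expectation (Pi_pmf {..<N} [] (\<lambda>_. traj d1 p pib T))
           (DecIS pibd pied \<phi> rd \<gamma> T N) = value_fn d1 p r \<gamma> T pie
       \<and> measure_pmf.expectation (Pi_pmf {..<N} [] (\<lambda>_. traj d1 p pib T))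
           (DecPDIS pibd pied \<phi> rd \<gamma> T N) = value_fn d1 p r \<gamma> T pie"
proof -
  \<comment> \<open>Unbiasedness holds for every \<open>\<gamma>\<close>.\<close>
  interpret factored_off_policy p \<phi> pd pib pie pibd pied
    using P Fb Fe AC by unfold_locales
  show ?thesis
    unfolding DecIS_def[abs_def] DecPDIS_def[abs_def]
    using expectation_decomposed_estimator[where r=r and rd=rd and trunc="\<lambda>_. T", OF N R]
      expectation_decomposed_estimator[where r=r and rd=rd and trunc="\<lambda>t. t", OF N R]
    by simp
qed

end
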